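(* Let $E$ be a real normed vector space, $C\subseteq E$ a nonempty closed convex set, $\phi\colon\mathbb{R}\to[0,+\infty]$ convex with $\phi(0)=0$, and $\psi\colon E\to(-\infty,+\infty]$ a $\phi$-convex function, real-valued on $C$ and $+\infty$ outside $C$. Assume $\partial\psi(C)=E^*$ or $C$ is compact; let $a\in C$, $a^\psi\in\partial\psi(a)$, with arbitrary predictions $\widehat{x}_t^*\in E^*$. (i) If $\theta_t=1$ for all $t$ (Optimistic Dual Averaging) and $\eta_1\geqslant\dots\geqslant\eta_{T+1}>0$, strategy S satisfies for all $z\in C$: \[\mathrm{Regret}(z,\dots,z)\leqslant\frac{1}{\eta_{T+1}}B_\psi(z,a^\psi)+\sum_{t=1}^T\frac{1}{\eta_t}\phi^\star\big(\eta_t\lVert x_t^*-\widehat{x}_t^*\rVert\big)-\sum_{t=1}^T\frac{1}{\eta_t}B_\psi\big(x_t,\widetilde{x}_t^\psi\big).\] (ii) If $\eta_t=1$ for all $t$ and $0<\theta_1\leqslant\dots\leqslant\theta_T$, strategy S satisfies for all $z\in C$: \[\mathrm{Regret}(z,\dots,z)\leqslant\frac{1}{\theta_1}B_\psi(z,a^\psi)+\sum_{t=1}^T\frac{1}{\theta_t}\phi^\star\big(\theta_t\lVert x_t^*-\widehat{x}_t^*\rVert\big)-\sum_{t=1}^T\frac{1}{\theta_t}B_\psi\big(x_t,\widetilde{x}_t^\psi\big).\]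
   Context: $E^*$ dual of $E$, $\langle\cdot,\cdot\rangle$ pairing, $\lVert\cdot\rVert$ norm/dual norm. $f^\star(x^* )=\sup_{x}(\langle x^*,x\rangle-f(x))$; $B_f(x,y^* )=f(x)+f^\star(y^* )-\langle y^*,x\rangle$; $\partial f(x)=\{x^*:B_f(x,x^* )=0\}$; $\partial f(C)=\bigcup_{x\in C}\partial f(x)$; $\partial\psi^\star(x^* ):=\arg\max_{x\in E}(\langle x^*,x\rangle-\psi(x))$. $\phi^\star$ is the Fenchel conjugate of $\phi$. $\psi$ is $\phi$-convex if $B_\psi(x,y^* )\geqslant\phi(\lVert x-y\rVert)$ for all $x\in E$ and all $y$, $y^*\in\partial\psi(y)$. Protocol: at rounds $t=1,\dots,T$ the learner chooses $x_t\in C$, the adversary reveals a proper $\varphi_t$ with $C\subseteq\operatorname{dom}\partial\varphi_t$, $x_t^*\in\partial\varphi_t(x_t)$; $\mathrm{Regret}(z_1,\dots,z_T)=\sum_t\varphi_t(x_t)-\sum_t\varphi_t(z_t)$. Strategy S with parameters $\eta_t,\theta_t>0$: $\widetilde{x}_t^\psi=a^\psi-\eta_t\sum_{i=1}^{t-1}\theta_ix_i^*$, $x_t\in\partial\psi^\star(\widetilde{x}_t^\psi-\eta_t\theta_t\widehat{x}_t^* )$. *)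

theory Defs
  imports "HOL-Analysis.Analysis"
begin

(* Extended-real valued functions on a real normed space E; the dual dual E^dual is
  the space of bounded linear functionals 'a \<Rightarrow>\<^sub>L real with the operator norm. *)

definition fconj :: "('a::real_normed_vector \<Rightarrow> ereal) \<Rightarrow> ('a \<Rightarrow>\<^sub>L real) \<Rightarrow> ereal" where
  "fconj f xs = (SUP x. ereal (blinfun_apply xs x) - f x)"

definition bregman :: "('a::real_normed_vector \<Rightarrow> ereal) \<Rightarrow> 'a \<Rightarrow> ('a \<Rightarrow>\<^sub>L real) \<Rightarrow> ereal" where
  "bregman f x ys = f x + fconj f ys - ereal (blinfun_apply ys x)"

definition subdiff :: "('a::real_normed_vector \<Rightarrow> ereal) \<Rightarrow> 'a \<Rightarrow> ('a \<Rightarrow>\<^sub>L real) set" where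
  "subdiff f x = {xs. bregman f x xs = 0}"

definition conj_subdiff :: "('a::real_normed_vector \<Rightarrow> ereal) \<Rightarrow> ('a \<Rightarrow>\<^sub>L real) \<Rightarrow> 'a set" where
  "conj_subdiff f xs = {x. \<forall>y. ereal (blinfun_apply xs y) - f y \<le> ereal (blinfun_apply xs x) - f x}"

definition proper_fun :: "('a \<Rightarrow> ereal) \<Rightarrow> bool" where
  "proper_fun f \<longleftrightarrow> (\<forall>x. f x \<noteq> -\<infinity>) \<and> (\<exists>x. f x \<noteq> \<infinity>)"

definition dom_subdiff :: "('a::real_normed_vector \<Rightarrow> ereal) \<Rightarrow> 'a set" where
  "dom_subdiff f = {x. subdiff f x \<noteq> {}}"

(* Convexity of an extended-valued function \<phi> : \<real> \<rightarrow> [0,+\<infinity>] (convention 0 \<cdot> \<infinity> = 0). *)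
definition ereal_convex :: "(real \<Rightarrow> ereal) \<Rightarrow> bool" where
  "ereal_convex \<phi> \<longleftrightarrow> (\<forall>x y u. 0 \<le> u \<and> u \<le> 1 \<longrightarrow>
      \<phi> ((1 - u) * x + u * y) \<le> ereal (1 - u) * \<phi> x + ereal u * \<phi> y)"

definition real_conj :: "(real \<Rightarrow> ereal) \<Rightarrow> real \<Rightarrow> ereal" where
  "real_conj \<phi> s = (SUP r. ereal (s * r) - \<phi> r)"

definition phi_convex :: "(real \<Rightarrow> ereal) \<Rightarrow> ('a::real_normed_vector \<Rightarrow> ereal) \<Rightarrow> bool" where
  "phi_convex \<phi> \<psi> \<longleftrightarrow> (\<forall>x y ys. ys \<in> subdiff \<psi> y \<longrightarrow> bregman \<psi> x ys \<ge> \<phi> (norm (x - y)))"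

definition xtil :: "('a::real_normed_vector \<Rightarrow>\<^sub>L real) \<Rightarrow> (nat \<Rightarrow> real) \<Rightarrow> (nat \<Rightarrow> real)
    \<Rightarrow> (nat \<Rightarrow> ('a \<Rightarrow>\<^sub>L real)) \<Rightarrow> nat \<Rightarrow> ('a \<Rightarrow>\<^sub>L real)" where
  "xtil a\<psi> \<eta> \<theta> xs t = a\<psi> - \<eta> t *\<^sub>R (\<Sum>i\<in>{1..<t}. \<theta> i *\<^sub>R xs i)"

end

theory Submission
  imports Defs
begin

text \<open>Write \<open>\<psi>\<^sup>\<star>\<close> for the conjugate of \<open>\<psi>\<close>; it is finite everywhere because
  \<open>\<partial>\<psi>(C) = E\<^sup>*\<close> or \<open>C\<close> is compact. If \<open>x\<close> maximises \<open>w(\<cdot>) - \<psi>\<close>, then \<open>w \<in> \<partial>\<psi>(x)\<close>,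
  and \<open>\<phi>\<close>-convexity yields \<open>\<psi>\<^sup>\<star>(w - d) \<le> (w - d)(x) - \<psi>(x) + \<phi>\<^sup>\<star>(\<parallel>d\<parallel>)\<close>. Taking
  \<open>w = xtil\<^sub>t - \<eta>\<^sub>t\<theta>\<^sub>t xh\<^sub>t\<close> and \<open>d = \<eta>\<^sub>t\<theta>\<^sub>t (xs\<^sub>t - xh\<^sub>t)\<close> bounds the change of \<open>\<psi>\<^sup>\<star>\<close>
  along the dual path in round \<open>t\<close> by \<open>\<phi>\<^sup>\<star>(\<eta>\<^sub>t\<theta>\<^sub>t \<parallel>xs\<^sub>t - xh\<^sub>t\<parallel>) - B\<^sub>\<psi>(x\<^sub>t, xtil\<^sub>t)\<close>.
  After linearising the losses at the subgradients \<open>xs\<^sub>t\<close>, these bounds telescope: for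
  decreasing \<open>\<eta>\<close> through the potential \<open>(\<psi>\<^sup>\<star>(a\<^sup>\<psi> - \<eta>\<^sub>t G\<^sub>t) - \<psi>\<^sup>\<star>(a\<^sup>\<psi>)) / \<eta>\<^sub>t\<close> with
  \<open>G\<^sub>t = dual_sum \<theta> xs t\<close>, which can only decrease with \<open>\<eta>\<^sub>t\<close> because \<open>\<psi>\<^sup>\<star>\<close> is convex;
  for increasing \<open>\<theta>\<close> through the divergences \<open>B\<^sub>\<psi>(z, xtil\<^sub>t)\<close> weighted by \<open>1 / \<theta>\<^sub>t\<close>.\<close>

lemma fconj_upper: "ereal (blinfun_apply v y) - f y \<le> fconj f v"
  unfolding fconj_def by (rule SUP_upper) simp

lemma fconj_leI: "(\<And>y. ereal (blinfun_apply v y) - f y \<le> c) \<Longrightarrow> fconj f v \<le> c"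
  unfolding fconj_def by (rule SUP_least)

lemma real_conj_upper: "ereal (s * r) - \<phi> r \<le> real_conj \<phi> s"
  unfolding real_conj_def by (rule SUP_upper) simp

lemma real_conj_nonneg:
  assumes "\<phi> 0 = 0"
  shows "0 \<le> real_conj \<phi> s"
  using real_conj_upper[of s 0 \<phi>] assms by (simp add: zero_ereal_def)

lemma fconj_not_MInf:
  assumes "proper_fun f"
  shows "fconj f v \<noteq> -\<infinity>"
proof -
  obtain y where "f y \<noteq> \<infinity>" "f y \<noteq> -\<infinity>"
    using assms unfolding proper_fun_def by blast
  then show ?thesis
    using fconj_upper[of v y f] by (cases "f y") auto
qed

lemma subdiff_finite:
  assumes "proper_fun f" "v \<in> subdiff f y"
  shows "\<bar>f y\<bar> \<noteq> \<infinity>" "\<bar>fconj f v\<bar> \<noteq> \<infinity>"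
proof -
  have "f y \<noteq> -\<infinity>"
    using assms(1) unfolding proper_fun_def by blast
  moreover have "f y + fconj f v - ereal (blinfun_apply v y) = 0"
    using assms(2) unfolding subdiff_def bregman_def by simp
  ultimately show "\<bar>f y\<bar> \<noteq> \<infinity>" "\<bar>fconj f v\<bar> \<noteq> \<infinity>"
    using fconj_not_MInf[OF assms(1), of v] by (cases "f y"; cases "fconj f v"; simp)+
qed

lemma subgradient_inequality:
  assumes "proper_fun f" "v \<in> subdiff f y"
  shows "f y \<le> f z + ereal (blinfun_apply v y - blinfun_apply v z)"
proof -
  obtain p q where p: "f y = ereal p" and q: "fconj f v = ereal q"
    using subdiff_finite[OF assms] by force
  have "p + q - blinfun_apply v y = 0"
    using assms(2) p q unfolding subdiff_def bregman_def by simp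
  moreover have "ereal (blinfun_apply v z) - f z \<le> ereal q"
    using fconj_upper q by metis
  ultimately show ?thesis
    using p by (cases "f z") auto
qed

lemma regret_le_linearized:
  assumes "finite A"
    and "\<And>t. t \<in> A \<Longrightarrow> proper_fun (f t) \<and> xs t \<in> subdiff (f t) (x t) \<and> z \<in> dom_subdiff (f t)"
  shows "(\<Sum>t\<in>A. f t (x t)) - (\<Sum>t\<in>A. f t z)
    \<le> ereal (\<Sum>t\<in>A. blinfun_apply (xs t) (x t) - blinfun_apply (xs t) z)"
proof -
  have finite_values: "f t (x t) = ereal (real_of_ereal (f t (x t)))"
      "f t z = ereal (real_of_ereal (f t z))" if t: "t \<in> A" for t
  proof -
    obtain u where "u \<in> subdiff (f t) z"
      using assms(2)[OF t] unfolding dom_subdiff_def by blast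
    then show "f t (x t) = ereal (real_of_ereal (f t (x t)))" "f t z = ereal (real_of_ereal (f t z))"
      using assms(2)[OF t] subdiff_finite(1) by (metis ereal_real')+
  qed
  have "real_of_ereal (f t (x t)) - real_of_ereal (f t z)
      \<le> blinfun_apply (xs t) (x t) - blinfun_apply (xs t) z" if "t \<in> A" for t
    using subgradient_inequality[of "f t" "xs t" "x t" z] assms(2)[OF that] finite_values[OF that]
    by (metis ereal_less_eq(3) plus_ereal.simps(1) add.commute diff_le_eq)
  then have "(\<Sum>t\<in>A. real_of_ereal (f t (x t)) - real_of_ereal (f t z))
      \<le> (\<Sum>t\<in>A. blinfun_apply (xs t) (x t) - blinfun_apply (xs t) z)"
    by (rule sum_mono)
  moreover have "(\<Sum>t\<in>A. f t (x t)) = ereal (\<Sum>t\<in>A. real_of_ereal (f t (x t)))"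
    "(\<Sum>t\<in>A. f t z) = ereal (\<Sum>t\<in>A. real_of_ereal (f t z))"
    unfolding sum_ereal[symmetric] by (intro sum.cong refl finite_values; assumption)+
  ultimately show ?thesis
    by (simp add: sum_subtractf)
qed

lemma regret_le_ereal_bound:
  fixes e :: "nat \<Rightarrow> real" and R :: "nat \<Rightarrow> ereal"
  assumes "finite A"
    and adversary: "\<And>t. t \<in> A \<Longrightarrow> proper_fun (f t) \<and> xs t \<in> subdiff (f t) (x t) \<and> z \<in> dom_subdiff (f t)"
    and e: "\<And>t. t \<in> A \<Longrightarrow> 0 < e t"
    and R: "\<And>t. t \<in> A \<Longrightarrow> 0 \<le> R t"
    and real_bound: "\<And>c. (\<And>t. t \<in> A \<Longrightarrow> R t = ereal (c t)) \<Longrightarrow>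
      (\<Sum>t\<in>A. blinfun_apply (xs t) (x t) - blinfun_apply (xs t) z)
        \<le> B / e0 + (\<Sum>t\<in>A. (c t - b t) / e t)"
  shows "(\<Sum>t\<in>A. f t (x t)) - (\<Sum>t\<in>A. f t z)
    \<le> ereal (1 / e0) * ereal B + (\<Sum>t\<in>A. ereal (1 / e t) * R t) - (\<Sum>t\<in>A. ereal (1 / e t) * ereal (b t))"
proof -
  have b_sum: "(\<Sum>t\<in>A. ereal (1 / e t) * ereal (b t)) = ereal (\<Sum>t\<in>A. b t / e t)"
    by simp
  show ?thesis
  proof (cases "\<exists>t\<in>A. R t = \<infinity>")
    case True
    then obtain s where "s \<in> A" "ereal (1 / e s) * R s = \<infinity>"
      using e by force
    then have "(\<Sum>t\<in>A. ereal (1 / e t) * R t) = \<infinity>"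
      using \<open>finite A\<close> by (auto simp: sum_Pinfty)
    then show ?thesis
      by (simp add: b_sum)
  next
    case False
    define c where "c t = real_of_ereal (R t)" for t
    have c: "R t = ereal (c t)" if "t \<in> A" for t
      using False R[OF that] that unfolding c_def by (cases "R t") auto
    have "(\<Sum>t\<in>A. ereal (1 / e t) * R t) = (\<Sum>t\<in>A. ereal (c t / e t))"
      by (rule sum.cong) (simp_all add: c)
    then have rhs: "ereal (1 / e0) * ereal B + (\<Sum>t\<in>A. ereal (1 / e t) * R t)
          - (\<Sum>t\<in>A. ereal (1 / e t) * ereal (b t))
        = ereal (B / e0 + (\<Sum>t\<in>A. (c t - b t) / e t))"
      by (simp add: b_sum diff_divide_distrib sum_subtractf)
    have "(\<Sum>t\<in>A. blinfun_apply (xs t) (x t) - blinfun_apply (xs t) z)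
        \<le> B / e0 + (\<Sum>t\<in>A. (c t - b t) / e t)"
      using c by (rule real_bound)
    moreover have "(\<Sum>t\<in>A. f t (x t)) - (\<Sum>t\<in>A. f t z)
        \<le> ereal (\<Sum>t\<in>A. blinfun_apply (xs t) (x t) - blinfun_apply (xs t) z)"
      using \<open>finite A\<close> adversary by (rule regret_le_linearized)
    ultimately show ?thesis
      unfolding rhs by (simp add: order_trans)
  qed
qed

lemma fconj_not_PInf_if_compact:
  assumes "compact C" "\<And>y. y \<in> C \<Longrightarrow> \<bar>\<psi> y\<bar> \<noteq> \<infinity>" "\<And>y. y \<notin> C \<Longrightarrow> \<psi> y = \<infinity>"
    and "\<bar>fconj \<psi> u\<bar> \<noteq> \<infinity>"
  shows "fconj \<psi> v \<noteq> \<infinity>"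
proof -
  obtain M where M: "\<And>y. y \<in> C \<Longrightarrow> norm y \<le> M"
    using compact_imp_bounded[OF assms(1)] bounded_iff by blast
  obtain q where q: "fconj \<psi> u = ereal q"
    using assms(4) by force
  have "fconj \<psi> v \<le> ereal (norm (v - u) * M + q)"
  proof (rule fconj_leI)
    fix y
    show "ereal (blinfun_apply v y) - \<psi> y \<le> ereal (norm (v - u) * M + q)"
    proof (cases "y \<in> C")
      case True
      then obtain p where p: "\<psi> y = ereal p"
        using assms(2) by force
      have "blinfun_apply u y - p \<le> q"
        using fconj_upper[of u y \<psi>] p q by simp
      moreover have "blinfun_apply (v - u) y \<le> norm (v - u) * M"
        using norm_blinfun[of "v - u" y] M[OF True]
        by (smt (verit) mult_left_mono norm_ge_zero real_norm_def)
      ultimately show ?thesis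
        using p by (simp add: blinfun.diff_left)
    qed (simp add: assms(3))
  qed
  then show ?thesis
    by auto
qed

locale regularizer =
  fixes \<psi> :: "'a::real_normed_vector \<Rightarrow> ereal" and C :: "'a set"
  assumes psi_finite: "y \<in> C \<Longrightarrow> \<bar>\<psi> y\<bar> \<noteq> \<infinity>"
    and psi_infinite: "y \<notin> C \<Longrightarrow> \<psi> y = \<infinity>"
    and fconj_finite: "\<bar>fconj \<psi> v\<bar> \<noteq> \<infinity>"

lemma regularizerI:
  assumes "\<forall>y\<in>C. \<bar>\<psi> y\<bar> \<noteq> \<infinity>" "\<forall>y. y \<notin> C \<longrightarrow> \<psi> y = \<infinity>" "a \<in> C" "a\<psi> \<in> subdiff \<psi> a"
    and "(\<Union>y\<in>C. subdiff \<psi> y) = UNIV \<or> compact C"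
  shows "regularizer \<psi> C"
proof
  have "\<psi> y \<noteq> -\<infinity>" for y
    using assms(1,2) by (cases "y \<in> C") auto
  then have proper: "proper_fun \<psi>"
    using assms(1,3) unfolding proper_fun_def by (metis abs_ereal.simps(3))
  fix v
  show "\<bar>fconj \<psi> v\<bar> \<noteq> \<infinity>"
    using assms(5)
  proof
    assume "(\<Union>y\<in>C. subdiff \<psi> y) = UNIV"
    then obtain y where "v \<in> subdiff \<psi> y"
      by (metis UNIV_I UN_E)
    then show ?thesis
      by (rule subdiff_finite(2)[OF proper])
  next
    assume "compact C"
    then have "fconj \<psi> v \<noteq> \<infinity>"
      by (rule fconj_not_PInf_if_compact)
        (use assms(1,2) subdiff_finite(2)[OF proper assms(4)] in auto)
    then show ?thesis
      using fconj_not_MInf[OF proper, of v] by (cases "fconj \<psi> v") auto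
  qed
qed (use assms in auto)

context regularizer
begin

definition real_psi :: "'a \<Rightarrow> real" where
  "real_psi y = real_of_ereal (\<psi> y)"

definition real_fconj :: "('a \<Rightarrow>\<^sub>L real) \<Rightarrow> real" where
  "real_fconj v = real_of_ereal (fconj \<psi> v)"

definition real_bregman :: "'a \<Rightarrow> ('a \<Rightarrow>\<^sub>L real) \<Rightarrow> real" where
  "real_bregman y v = real_psi y + real_fconj v - blinfun_apply v y"

lemma psi_eq: "y \<in> C \<Longrightarrow> \<psi> y = ereal (real_psi y)"
  using psi_finite unfolding real_psi_def by (simp add: ereal_real')

lemma fconj_eq: "fconj \<psi> v = ereal (real_fconj v)"
  using fconj_finite unfolding real_fconj_def by (simp add: ereal_real')

lemma bregman_eq: "y \<in> C \<Longrightarrow> bregman \<psi> y v = ereal (real_bregman y v)"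
  unfolding bregman_def real_bregman_def by (simp add: psi_eq fconj_eq)

lemma real_fconj_upper: "y \<in> C \<Longrightarrow> blinfun_apply v y - real_psi y \<le> real_fconj v"
  using fconj_upper[of v y \<psi>] by (simp add: psi_eq fconj_eq)

lemma real_bregman_nonneg:
  assumes "y \<in> C"
  shows "0 \<le> real_bregman y v"
  using real_fconj_upper[OF assms, of v] unfolding real_bregman_def by simp

lemma real_fconj_leI:
  assumes "\<And>y. y \<in> C \<Longrightarrow> blinfun_apply v y - real_psi y \<le> c"
  shows "real_fconj v \<le> c"
proof -
  have "fconj \<psi> v \<le> ereal c"
  proof (rule fconj_leI)
    fix y
    show "ereal (blinfun_apply v y) - \<psi> y \<le> ereal c"
      by (cases "y \<in> C") (simp_all add: psi_eq assms psi_infinite)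
  qed
  then show ?thesis
    by (simp add: fconj_eq)
qed

lemma real_fconj_argmax:
  assumes "x \<in> C" "x \<in> conj_subdiff \<psi> w"
  shows "real_fconj w = blinfun_apply w x - real_psi x"
proof (rule antisym)
  show "real_fconj w \<le> blinfun_apply w x - real_psi x"
  proof (rule real_fconj_leI)
    fix y
    assume "y \<in> C"
    have "ereal (blinfun_apply w y) - \<psi> y \<le> ereal (blinfun_apply w x) - \<psi> x"
      using assms(2) unfolding conj_subdiff_def by blast
    then show "blinfun_apply w y - real_psi y \<le> blinfun_apply w x - real_psi x"
      by (simp add: psi_eq \<open>y \<in> C\<close> assms(1))
  qed
qed (rule real_fconj_upper[OF assms(1)])

text \<open>\<open>\<phi>\<close>-convexity of \<open>\<psi>\<close> is used at the maximiser \<open>x\<close>, where \<open>w \<in> \<partial>\<psi>(x)\<close>: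
  \<open>d(y - x) \<ge> -\<parallel>d\<parallel> \<parallel>y - x\<parallel>\<close> and \<open>\<parallel>d\<parallel> r - \<phi>(r) \<le> \<phi>\<^sup>\<star>(\<parallel>d\<parallel>)\<close> absorb the perturbation.\<close>
lemma real_fconj_perturb_le:
  assumes "phi_convex \<phi> \<psi>" "x \<in> C"
    and argmax: "real_fconj w = blinfun_apply w x - real_psi x"
    and c: "real_conj \<phi> (norm d) = ereal c"
  shows "real_fconj (w - d) \<le> blinfun_apply (w - d) x - real_psi x + c"
proof (rule real_fconj_leI)
  fix y
  assume "y \<in> C"
  have "w \<in> subdiff \<psi> x"
    using argmax by (simp add: subdiff_def bregman_eq[OF \<open>x \<in> C\<close>] real_bregman_def)
  then have "\<phi> (norm (y - x)) \<le> ereal (real_bregman y w)"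
    using assms(1) bregman_eq[OF \<open>y \<in> C\<close>] unfolding phi_convex_def by metis
  then have "ereal (norm d * norm (y - x)) - ereal (real_bregman y w)
      \<le> ereal (norm d * norm (y - x)) - \<phi> (norm (y - x))"
    by (rule ereal_minus_mono[OF order_refl])
  also have "\<dots> \<le> ereal c"
    using real_conj_upper c by metis
  finally have "norm d * norm (y - x) - real_bregman y w \<le> c"
    by simp
  moreover have "- blinfun_apply d (y - x) \<le> norm d * norm (y - x)"
    using norm_blinfun[of d "y - x"] by (metis abs_le_D2 real_norm_def)
  ultimately show "blinfun_apply (w - d) y - real_psi y \<le> blinfun_apply (w - d) x - real_psi x + c"
    using argmax by (simp add: real_bregman_def blinfun.diff_left blinfun.diff_right)
qed

lemma optimistic_step:
  assumes "phi_convex \<phi> \<psi>" "x \<in> C" "x \<in> conj_subdiff \<psi> (u - s *\<^sub>R xh)" "0 \<le> s"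
    and "real_conj \<phi> (s * norm (xs - xh)) = ereal c"
  shows "real_fconj (u - s *\<^sub>R xs) - real_fconj u + s * blinfun_apply xs x \<le> c - real_bregman x u"
proof -
  have "real_conj \<phi> (norm (s *\<^sub>R (xs - xh))) = ereal c"
    using assms(4,5) by simp
  from real_fconj_perturb_le[OF assms(1,2) real_fconj_argmax[OF assms(2,3)] this]
  have "real_fconj (u - s *\<^sub>R xs) \<le> blinfun_apply (u - s *\<^sub>R xs) x - real_psi x + c"
    by (simp add: algebra_simps)
  then show ?thesis
    by (simp add: real_bregman_def blinfun.bilinear_simps)
qed

lemma convex_on_real_fconj_line: "convex_on UNIV (\<lambda>s. real_fconj (u - s *\<^sub>R g))"
proof (rule convex_onI)
  fix t r s :: real
  assume "0 < t" "t < 1"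
  show "real_fconj (u - ((1 - t) *\<^sub>R r + t *\<^sub>R s) *\<^sub>R g)
      \<le> (1 - t) * real_fconj (u - r *\<^sub>R g) + t * real_fconj (u - s *\<^sub>R g)"
  proof (rule real_fconj_leI)
    fix y
    assume "y \<in> C"
    have "(1 - t) * (blinfun_apply (u - r *\<^sub>R g) y - real_psi y) \<le> (1 - t) * real_fconj (u - r *\<^sub>R g)"
      "t * (blinfun_apply (u - s *\<^sub>R g) y - real_psi y) \<le> t * real_fconj (u - s *\<^sub>R g)"
      using \<open>0 < t\<close> \<open>t < 1\<close> real_fconj_upper[OF \<open>y \<in> C\<close>] by (simp_all add: mult_left_mono)
    moreover have "blinfun_apply (u - ((1 - t) *\<^sub>R r + t *\<^sub>R s) *\<^sub>R g) y - real_psi y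
        = (1 - t) * (blinfun_apply (u - r *\<^sub>R g) y - real_psi y) + t * (blinfun_apply (u - s *\<^sub>R g) y - real_psi y)"
      by (simp add: blinfun.bilinear_simps algebra_simps)
    ultimately show "blinfun_apply (u - ((1 - t) *\<^sub>R r + t *\<^sub>R s) *\<^sub>R g) y - real_psi y
        \<le> (1 - t) * real_fconj (u - r *\<^sub>R g) + t * real_fconj (u - s *\<^sub>R g)"
      by linarith
  qed
qed simp

lemma real_fconj_slope_mono:
  assumes "0 < s" "s \<le> r"
  shows "(real_fconj (u - s *\<^sub>R g) - real_fconj u) / s \<le> (real_fconj (u - r *\<^sub>R g) - real_fconj u) / r"
proof (cases "s = r")
  case False
  with assms have "s < r"
    by simp
  from convex_on_slope_le(1)[OF convex_on_real_fconj_line[of u g] UNIV_I UNIV_I assms(1) this]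
  show ?thesis
    unfolding diff_divide_distrib by simp
qed simp

end

definition dual_sum :: "(nat \<Rightarrow> real) \<Rightarrow> (nat \<Rightarrow> 'a::real_vector) \<Rightarrow> nat \<Rightarrow> 'a" where
  "dual_sum \<theta> xs t = (\<Sum>i\<in>{1..<t}. \<theta> i *\<^sub>R xs i)"

lemma xtil_eq_dual_sum: "xtil a \<eta> \<theta> xs t = a - \<eta> t *\<^sub>R dual_sum \<theta> xs t"
  unfolding xtil_def dual_sum_def ..

lemma dual_sum_eq_0 [simp]: "t \<le> 1 \<Longrightarrow> dual_sum \<theta> xs t = 0"
  unfolding dual_sum_def by simp

lemma dual_sum_Suc: "1 \<le> t \<Longrightarrow> dual_sum \<theta> xs (Suc t) = dual_sum \<theta> xs t + \<theta> t *\<^sub>R xs t"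
  unfolding dual_sum_def by (simp add: sum.atLeastLessThan_Suc)

lemma dual_sum_apply:
  "blinfun_apply (dual_sum \<theta> xs (Suc T)) z = (\<Sum>t=1..T. \<theta> t * blinfun_apply (xs t) z)"
  unfolding dual_sum_def by (simp add: blinfun.bilinear_simps atLeastLessThanSuc_atLeastAtMost)

lemma sum_antitone_weighted_telescope_le:
  fixes w Q :: "nat \<Rightarrow> real"
  assumes antitone: "\<And>t. t \<in> {1..<T} \<Longrightarrow> w (Suc t) \<le> w t"
    and w_nonneg: "\<And>t. t \<in> {1..T} \<Longrightarrow> 0 \<le> w t" "0 \<le> w 1"
    and Q_nonneg: "\<And>t. 0 \<le> Q t"
  shows "(\<Sum>t=1..T. w t * (Q t - Q (Suc t))) \<le> w 1 * Q 1"
proof (cases "T = 0")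
  case True
  then show ?thesis
    using w_nonneg(2) Q_nonneg by simp
next
  case False
  have partial: "(\<Sum>t=1..n. w t * (Q t - Q (Suc t))) + w n * Q (Suc n) \<le> w 1 * Q 1"
    if "1 \<le> n" "n \<le> T" for n
    using that
  proof (induction n rule: dec_induct)
    case (step n)
    have "w (Suc n) * Q (Suc n) \<le> w n * Q (Suc n)"
      using antitone[of n] step Q_nonneg by (simp add: mult_right_mono)
    with step show ?case
      by (simp add: algebra_simps)
  qed (simp add: algebra_simps)
  have "0 \<le> w T * Q (Suc T)"
    using False w_nonneg(1)[of T] Q_nonneg by simp
  with partial[of T] False show ?thesis
    by simp
qed

lemma pos_if_antitone_ivl:
  fixes \<eta> :: "nat \<Rightarrow> real"
  assumes "\<And>t. t \<in> {1..T} \<Longrightarrow> \<eta> (Suc t) \<le> \<eta> t" "0 < \<eta> (Suc T)" "t \<in> {1..Suc T}"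
  shows "0 < \<eta> t"
proof -
  have "\<eta> (Suc T) \<le> \<eta> t"
    by (rule lift_Suc_antimono_le_ivl[of "{1..T}"]) (use assms in auto)
  with assms(2) show ?thesis
    by simp
qed

lemma pos_if_mono_ivl:
  fixes \<theta> :: "nat \<Rightarrow> real"
  assumes "0 < \<theta> 1" "\<And>t. t \<in> {1..<T} \<Longrightarrow> \<theta> t \<le> \<theta> (Suc t)" "t \<in> {1..T}"
  shows "0 < \<theta> t"
proof -
  have "\<theta> 1 \<le> \<theta> t"
    by (rule lift_Suc_mono_le_ivl[of "{1..<T}"]) (use assms in auto)
  with assms(1) show ?thesis
    by simp
qed

context regularizer
begin

lemma linear_regret_decreasing_steps:
  fixes \<eta> \<theta> c :: "nat \<Rightarrow> real"
  assumes "phi_convex \<phi> \<psi>" "z \<in> C"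
    and play: "\<And>t. t \<in> {1..T} \<Longrightarrow>
      x t \<in> C \<and> x t \<in> conj_subdiff \<psi> (xtil a \<eta> \<theta> xs t - (\<eta> t * \<theta> t) *\<^sub>R xh t)"
    and \<theta>: "\<And>t. t \<in> {1..T} \<Longrightarrow> 0 \<le> \<theta> t"
    and \<eta>: "\<And>t. t \<in> {1..T} \<Longrightarrow> \<eta> (Suc t) \<le> \<eta> t" "0 < \<eta> (Suc T)"
    and c: "\<And>t. t \<in> {1..T} \<Longrightarrow> real_conj \<phi> (\<eta> t * \<theta> t * norm (xs t - xh t)) = ereal (c t)"
  shows "(\<Sum>t=1..T. \<theta> t * (blinfun_apply (xs t) (x t) - blinfun_apply (xs t) z))
    \<le> real_bregman z a / \<eta> (Suc T)
      + (\<Sum>t=1..T. (c t - real_bregman (x t) (xtil a \<eta> \<theta> xs t)) / \<eta> t)"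
proof -
  define G where "G = dual_sum \<theta> xs"
  define h where "h t = (real_fconj (a - \<eta> t *\<^sub>R G t) - real_fconj a) / \<eta> t" for t
  have \<eta>_pos: "0 < \<eta> t" if "t \<in> {1..Suc T}" for t
    using \<eta> that by (rule pos_if_antitone_ivl)
  have step: "\<theta> t * blinfun_apply (xs t) (x t) + (h (Suc t) - h t)
      \<le> (c t - real_bregman (x t) (xtil a \<eta> \<theta> xs t)) / \<eta> t" if t: "t \<in> {1..T}" for t
  proof -
    have "xtil a \<eta> \<theta> xs t - (\<eta> t * \<theta> t) *\<^sub>R xs t = a - \<eta> t *\<^sub>R G (Suc t)"
      using t by (simp add: xtil_eq_dual_sum G_def dual_sum_Suc algebra_simps)
    then have "real_fconj (a - \<eta> t *\<^sub>R G (Suc t)) - real_fconj (xtil a \<eta> \<theta> xs t)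
        + \<eta> t * \<theta> t * blinfun_apply (xs t) (x t) \<le> c t - real_bregman (x t) (xtil a \<eta> \<theta> xs t)"
      using optimistic_step[OF assms(1), of "x t" "xtil a \<eta> \<theta> xs t" "\<eta> t * \<theta> t" "xh t" "xs t" "c t"]
        play[OF t] \<theta>[OF t] \<eta>_pos[of t] c[OF t] t by simp
    then have "(real_fconj (a - \<eta> t *\<^sub>R G (Suc t)) - real_fconj (xtil a \<eta> \<theta> xs t)
        + \<eta> t * \<theta> t * blinfun_apply (xs t) (x t)) / \<eta> t
        \<le> (c t - real_bregman (x t) (xtil a \<eta> \<theta> xs t)) / \<eta> t"
      using \<eta>_pos[of t] t by (simp add: divide_right_mono)
    then have "(real_fconj (a - \<eta> t *\<^sub>R G (Suc t)) - real_fconj a) / \<eta> t - h t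
        + \<theta> t * blinfun_apply (xs t) (x t) \<le> (c t - real_bregman (x t) (xtil a \<eta> \<theta> xs t)) / \<eta> t"
      using \<eta>_pos[of t] t by (simp add: h_def G_def xtil_eq_dual_sum diff_divide_distrib add_divide_distrib)
    moreover have "h (Suc t) \<le> (real_fconj (a - \<eta> t *\<^sub>R G (Suc t)) - real_fconj a) / \<eta> t"
      unfolding h_def using real_fconj_slope_mono \<eta>_pos[of "Suc t"] \<eta>(1)[OF t] t by simp
    ultimately show ?thesis
      by linarith
  qed
  have "(\<Sum>t=1..T. \<theta> t * blinfun_apply (xs t) (x t)) + (h (Suc T) - h 1)
      \<le> (\<Sum>t=1..T. (c t - real_bregman (x t) (xtil a \<eta> \<theta> xs t)) / \<eta> t)"
  proof -
    have "(\<Sum>t=1..T. \<theta> t * blinfun_apply (xs t) (x t) + (h (Suc t) - h t))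
        \<le> (\<Sum>t=1..T. (c t - real_bregman (x t) (xtil a \<eta> \<theta> xs t)) / \<eta> t)"
      by (intro sum_mono step)
    then show ?thesis
      by (simp add: sum.distrib sum_Suc_diff)
  qed
  moreover have "h 1 = 0"
    by (simp add: h_def G_def)
  moreover have "- blinfun_apply (G (Suc T)) z - real_bregman z a / \<eta> (Suc T) \<le> h (Suc T)"
  proof -
    have "blinfun_apply (a - \<eta> (Suc T) *\<^sub>R G (Suc T)) z - real_psi z - real_fconj a
        \<le> real_fconj (a - \<eta> (Suc T) *\<^sub>R G (Suc T)) - real_fconj a"
      using real_fconj_upper[OF \<open>z \<in> C\<close>] by simp
    then have "(blinfun_apply (a - \<eta> (Suc T) *\<^sub>R G (Suc T)) z - real_psi z - real_fconj a) / \<eta> (Suc T)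
        \<le> h (Suc T)"
      unfolding h_def using \<eta>(2) by (simp add: divide_right_mono)
    moreover have "(blinfun_apply (a - \<eta> (Suc T) *\<^sub>R G (Suc T)) z - real_psi z - real_fconj a) / \<eta> (Suc T)
        = - blinfun_apply (G (Suc T)) z - real_bregman z a / \<eta> (Suc T)"
      using \<eta>(2) by (simp add: real_bregman_def blinfun.bilinear_simps field_simps)
    ultimately show ?thesis
      by simp
  qed
  ultimately show ?thesis
    by (simp add: G_def dual_sum_apply right_diff_distrib sum_subtractf)
qed

lemma linear_regret_increasing_weights:
  fixes \<eta> \<theta> c :: "nat \<Rightarrow> real"
  assumes "phi_convex \<phi> \<psi>" "z \<in> C"
    and play: "\<And>t. t \<in> {1..T} \<Longrightarrow>
      x t \<in> C \<and> x t \<in> conj_subdiff \<psi> (xtil a \<eta> \<theta> xs t - (\<eta> t * \<theta> t) *\<^sub>R xh t)"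
    and \<eta>: "\<And>t. t \<in> {1..T} \<Longrightarrow> \<eta> t = 1"
    and \<theta>: "0 < \<theta> 1" "\<And>t. t \<in> {1..<T} \<Longrightarrow> \<theta> t \<le> \<theta> (Suc t)"
    and c: "\<And>t. t \<in> {1..T} \<Longrightarrow> real_conj \<phi> (\<theta> t * norm (xs t - xh t)) = ereal (c t)"
  shows "(\<Sum>t=1..T. blinfun_apply (xs t) (x t) - blinfun_apply (xs t) z)
    \<le> real_bregman z a / \<theta> 1
      + (\<Sum>t=1..T. (c t - real_bregman (x t) (xtil a \<eta> \<theta> xs t)) / \<theta> t)"
proof -
  define u where "u t = a - dual_sum \<theta> xs t" for t
  define Q where "Q t = real_bregman z (u t)" for t
  have \<theta>_pos: "0 < \<theta> t" if "t \<in> {1..T}" for t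
    using \<theta> that by (rule pos_if_mono_ivl)
  have step: "blinfun_apply (xs t) (x t) - blinfun_apply (xs t) z
      \<le> (c t - real_bregman (x t) (xtil a \<eta> \<theta> xs t)) / \<theta> t + 1 / \<theta> t * (Q t - Q (Suc t))"
    if t: "t \<in> {1..T}" for t
  proof -
    have xtil: "xtil a \<eta> \<theta> xs t = u t"
      using \<eta>[OF t] by (simp add: xtil_eq_dual_sum u_def)
    have u_Suc: "u (Suc t) = u t - \<theta> t *\<^sub>R xs t"
      using t by (simp add: u_def dual_sum_Suc)
    have "real_fconj (u (Suc t)) - real_fconj (u t) + \<theta> t * blinfun_apply (xs t) (x t)
        \<le> c t - real_bregman (x t) (u t)"
      using optimistic_step[OF assms(1), of "x t" "u t" "\<theta> t" "xh t" "xs t" "c t"]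
        play[OF t] \<eta>[OF t] \<theta>_pos[OF t] c[OF t] by (simp add: xtil u_Suc)
    moreover have "Q (Suc t) - Q t = real_fconj (u (Suc t)) - real_fconj (u t) + \<theta> t * blinfun_apply (xs t) z"
      by (simp add: Q_def real_bregman_def u_Suc blinfun.bilinear_simps)
    ultimately have "\<theta> t * (blinfun_apply (xs t) (x t) - blinfun_apply (xs t) z)
        \<le> c t - real_bregman (x t) (xtil a \<eta> \<theta> xs t) + (Q t - Q (Suc t))"
      by (simp add: xtil algebra_simps)
    then have "blinfun_apply (xs t) (x t) - blinfun_apply (xs t) z
        \<le> (c t - real_bregman (x t) (xtil a \<eta> \<theta> xs t) + (Q t - Q (Suc t))) / \<theta> t"
      using \<theta>_pos[OF t] by (simp add: pos_le_divide_eq mult.commute)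
    then show ?thesis
      by (simp add: add_divide_distrib)
  qed
  have "(\<Sum>t=1..T. 1 / \<theta> t * (Q t - Q (Suc t))) \<le> 1 / \<theta> 1 * Q 1"
    by (rule sum_antitone_weighted_telescope_le)
      (use \<theta> \<theta>_pos in \<open>auto simp: Q_def real_bregman_nonneg[OF \<open>z \<in> C\<close>] frac_le intro: less_imp_le\<close>)
  moreover have "(\<Sum>t=1..T. blinfun_apply (xs t) (x t) - blinfun_apply (xs t) z)
      \<le> (\<Sum>t=1..T. (c t - real_bregman (x t) (xtil a \<eta> \<theta> xs t)) / \<theta> t)
        + (\<Sum>t=1..T. 1 / \<theta> t * (Q t - Q (Suc t)))"
    unfolding sum.distrib[symmetric] by (intro sum_mono step)
  moreover have "Q 1 = real_bregman z a"
    by (simp add: Q_def u_def)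
  ultimately show ?thesis
    by simp
qed

lemma regret_decreasing_steps:
  fixes \<eta> \<theta> :: "nat \<Rightarrow> real"
  assumes "phi_convex \<phi> \<psi>" "\<phi> 0 = 0" "z \<in> C"
    and adversary: "\<And>t. t \<in> {1..T} \<Longrightarrow>
      proper_fun (f t) \<and> C \<subseteq> dom_subdiff (f t) \<and> xs t \<in> subdiff (f t) (x t)"
    and play: "\<And>t. t \<in> {1..T} \<Longrightarrow>
      x t \<in> C \<and> x t \<in> conj_subdiff \<psi> (xtil a \<eta> \<theta> xs t - (\<eta> t * \<theta> t) *\<^sub>R xh t)"
    and \<theta>: "\<And>t. t \<in> {1..T} \<Longrightarrow> \<theta> t = 1"
    and \<eta>: "\<And>t. t \<in> {1..T} \<Longrightarrow> \<eta> (Suc t) \<le> \<eta> t" "0 < \<eta> (T + 1)"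
  shows "(\<Sum>t\<in>{1..T}. f t (x t)) - (\<Sum>t\<in>{1..T}. f t z)
    \<le> ereal (1 / \<eta> (T + 1)) * bregman \<psi> z a
      + (\<Sum>t\<in>{1..T}. ereal (1 / \<eta> t) * real_conj \<phi> (\<eta> t * norm (xs t - xh t)))
      - (\<Sum>t\<in>{1..T}. ereal (1 / \<eta> t) * bregman \<psi> (x t) (xtil a \<eta> \<theta> xs t))"
proof -
  have \<eta>_pos: "0 < \<eta> t" if "t \<in> {1..T}" for t
    using pos_if_antitone_ivl[of T \<eta> t] \<eta> that by simp
  have bregman_sum: "(\<Sum>t\<in>{1..T}. ereal (1 / \<eta> t) * bregman \<psi> (x t) (xtil a \<eta> \<theta> xs t))
      = (\<Sum>t\<in>{1..T}. ereal (1 / \<eta> t) * ereal (real_bregman (x t) (xtil a \<eta> \<theta> xs t)))"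
    by (intro sum.cong) (simp_all add: bregman_eq play)
  show ?thesis
    unfolding bregman_eq[OF \<open>z \<in> C\<close>] bregman_sum
  proof (intro regret_le_ereal_bound)
    fix c
    assume "\<And>t. t \<in> {1..T} \<Longrightarrow> real_conj \<phi> (\<eta> t * norm (xs t - xh t)) = ereal (c t)"
    then have "(\<Sum>t=1..T. \<theta> t * (blinfun_apply (xs t) (x t) - blinfun_apply (xs t) z))
        \<le> real_bregman z a / \<eta> (Suc T) + (\<Sum>t=1..T. (c t - real_bregman (x t) (xtil a \<eta> \<theta> xs t)) / \<eta> t)"
      using assms \<eta> by (intro linear_regret_decreasing_steps) auto
    then show "(\<Sum>t\<in>{1..T}. blinfun_apply (xs t) (x t) - blinfun_apply (xs t) z)
        \<le> real_bregman z a / \<eta> (T + 1) + (\<Sum>t\<in>{1..T}. (c t - real_bregman (x t) (xtil a \<eta> \<theta> xs t)) / \<eta> t)"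
      using \<theta> by simp
  qed (use adversary \<open>z \<in> C\<close> \<eta>_pos real_conj_nonneg[of \<phi>, OF \<open>\<phi> 0 = 0\<close>] in auto)
qed

lemma regret_increasing_weights:
  fixes \<eta> \<theta> :: "nat \<Rightarrow> real"
  assumes "phi_convex \<phi> \<psi>" "\<phi> 0 = 0" "z \<in> C"
    and adversary: "\<And>t. t \<in> {1..T} \<Longrightarrow>
      proper_fun (f t) \<and> C \<subseteq> dom_subdiff (f t) \<and> xs t \<in> subdiff (f t) (x t)"
    and play: "\<And>t. t \<in> {1..T} \<Longrightarrow>
      x t \<in> C \<and> x t \<in> conj_subdiff \<psi> (xtil a \<eta> \<theta> xs t - (\<eta> t * \<theta> t) *\<^sub>R xh t)"
    and \<eta>: "\<And>t. t \<in> {1..T} \<Longrightarrow> \<eta> t = 1"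
    and \<theta>: "0 < \<theta> 1" "\<And>t. t \<in> {1..<T} \<Longrightarrow> \<theta> t \<le> \<theta> (Suc t)"
  shows "(\<Sum>t\<in>{1..T}. f t (x t)) - (\<Sum>t\<in>{1..T}. f t z)
    \<le> ereal (1 / \<theta> 1) * bregman \<psi> z a
      + (\<Sum>t\<in>{1..T}. ereal (1 / \<theta> t) * real_conj \<phi> (\<theta> t * norm (xs t - xh t)))
      - (\<Sum>t\<in>{1..T}. ereal (1 / \<theta> t) * bregman \<psi> (x t) (xtil a \<eta> \<theta> xs t))"
proof -
  have bregman_sum: "(\<Sum>t\<in>{1..T}. ereal (1 / \<theta> t) * bregman \<psi> (x t) (xtil a \<eta> \<theta> xs t))
      = (\<Sum>t\<in>{1..T}. ereal (1 / \<theta> t) * ereal (real_bregman (x t) (xtil a \<eta> \<theta> xs t)))"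
    by (intro sum.cong) (simp_all add: bregman_eq play)
  show ?thesis
    unfolding bregman_eq[OF \<open>z \<in> C\<close>] bregman_sum
  proof (intro regret_le_ereal_bound)
    fix c
    assume "\<And>t. t \<in> {1..T} \<Longrightarrow> real_conj \<phi> (\<theta> t * norm (xs t - xh t)) = ereal (c t)"
    then show "(\<Sum>t\<in>{1..T}. blinfun_apply (xs t) (x t) - blinfun_apply (xs t) z)
        \<le> real_bregman z a / \<theta> 1 + (\<Sum>t\<in>{1..T}. (c t - real_bregman (x t) (xtil a \<eta> \<theta> xs t)) / \<theta> t)"
      using assms by (intro linear_regret_increasing_weights) auto
  qed (use adversary \<open>z \<in> C\<close> pos_if_mono_ivl[OF \<theta>] real_conj_nonneg[of \<phi>, OF \<open>\<phi> 0 = 0\<close>] in auto)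
qed

end

theorem corollary3:
  fixes C :: "'a::real_normed_vector set"
    and \<phi> :: "real \<Rightarrow> ereal"
    and \<psi> :: "'a \<Rightarrow> ereal"
    and a :: 'a and a\<psi> :: "'a \<Rightarrow>\<^sub>L real"
    and T :: nat
    and \<eta> \<theta> :: "nat \<Rightarrow> real"
    and x :: "nat \<Rightarrow> 'a"
    and f :: "nat \<Rightarrow> 'a \<Rightarrow> ereal"
    and xs xh :: "nat \<Rightarrow> ('a \<Rightarrow>\<^sub>L real)"
  assumes C: "C \<noteq> {}" "closed C" "convex C"
    and phi: "ereal_convex \<phi>" "\<forall>r. \<phi> r \<ge> 0" "\<phi> 0 = 0"
    and psi: "phi_convex \<phi> \<psi>"
      "\<forall>y\<in>C. \<bar>\<psi> y\<bar> \<noteq> \<infinity>" "\<forall>y. y \<notin> C \<longrightarrow> \<psi> y = \<infinity>"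
    and surj_or_compact: "(\<Union>y\<in>C. subdiff \<psi> y) = UNIV \<or> compact C"
    and a: "a \<in> C" "a\<psi> \<in> subdiff \<psi> a"
    and learner: "\<forall>t\<in>{1..T}. x t \<in> C"
    and strategy: "\<forall>t\<in>{1..T}.
        x t \<in> conj_subdiff \<psi> (xtil a\<psi> \<eta> \<theta> xs t - (\<eta> t * \<theta> t) *\<^sub>R xh t)"
    and adversary: "\<forall>t\<in>{1..T}. proper_fun (f t) \<and> C \<subseteq> dom_subdiff (f t)
        \<and> xs t \<in> subdiff (f t) (x t)"
  shows
    "((\<forall>t\<in>{1..T}. \<theta> t = 1) \<and> (\<forall>t\<in>{1..T}. \<eta> (Suc t) \<le> \<eta> t) \<and> \<eta> (T + 1) > 0 \<longrightarrow>
      (\<forall>z\<in>C. (\<Sum>t\<in>{1..T}. f t (x t)) - (\<Sum>t\<in>{1..T}. f t z)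
        \<le> ereal (1 / \<eta> (T + 1)) * bregman \<psi> z a\<psi>
          + (\<Sum>t\<in>{1..T}. ereal (1 / \<eta> t) * real_conj \<phi> (\<eta> t * norm (xs t - xh t)))
          - (\<Sum>t\<in>{1..T}. ereal (1 / \<eta> t) * bregman \<psi> (x t) (xtil a\<psi> \<eta> \<theta> xs t))))
     \<and>
     ((\<forall>t\<in>{1..T}. \<eta> t = 1) \<and> 0 < \<theta> 1 \<and> (\<forall>t\<in>{1..<T}. \<theta> t \<le> \<theta> (Suc t)) \<longrightarrow>
      (\<forall>z\<in>C. (\<Sum>t\<in>{1..T}. f t (x t)) - (\<Sum>t\<in>{1..T}. f t z)
        \<le> ereal (1 / \<theta> 1) * bregman \<psi> z a\<psi>
          + (\<Sum>t\<in>{1..T}. ereal (1 / \<theta> t) * real_conj \<phi> (\<theta> t * norm (xs t - xh t)))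
          - (\<Sum>t\<in>{1..T}. ereal (1 / \<theta> t) * bregman \<psi> (x t) (xtil a\<psi> \<eta> \<theta> xs t))))"
proof -
  interpret regularizer \<psi> C
    using psi(2,3) a surj_or_compact by (rule regularizerI)
  have play: "\<And>t. t \<in> {1..T} \<Longrightarrow>
      x t \<in> C \<and> x t \<in> conj_subdiff \<psi> (xtil a\<psi> \<eta> \<theta> xs t - (\<eta> t * \<theta> t) *\<^sub>R xh t)"
    using learner strategy by blast
  show ?thesis
    using regret_decreasing_steps[OF psi(1) phi(3) _ _ play]
      regret_increasing_weights[OF psi(1) phi(3) _ _ play] adversary
    by blast
qed

end
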